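(* Let $G$ be a finite simple connected graph of order $n$ with minimum degree $\delta\ge 1$. Then $$\gamma^{0}_{st}(G)\le n-2\left\lceil \frac{2\gamma_t(G)+\delta-2}{2}\right\rceil .$$ Moreover, equality holds for the complete graph $K_n$ for every $n\ge 2$ and for the cycle $C_n$ for every $n\ge 3$.
   Context: For a vertex $v$ of a graph $G=(V,E)$, $N(v)$ is its open neighborhood, and for $f:V\to\mathbb{R}$ and $B\subseteq V$ write $f(B)=\sum_{v\in B}f(v)$; $f(V)$ is the weight of $f$. An inverse signed total dominating function (ISTDF) of $G$ is a function $f:V\to\{-1,1\}$ such that $f(N(v))\le 0$ for every $v\in V$. The inverse signed total domination number $\gamma^{0}_{st}(G)$ is the maximum weight of an ISTDF of $G$. A total dominating set of $G$ is a set $D\subseteq V$ such that every vertex of $V$ has at least one neighbor in $D$; $\gamma_t(G)$ is the minimum cardinality of a total dominating set. *)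

theory Defs
  imports Complex_Main
begin

definition simple_graph :: "'a set \<Rightarrow> ('a \<Rightarrow> 'a \<Rightarrow> bool) \<Rightarrow> bool" where
  "simple_graph V E \<longleftrightarrow> finite V \<and> (\<forall>x y. E x y \<longrightarrow> x \<in> V \<and> y \<in> V)
     \<and> (\<forall>x y. E x y \<longrightarrow> E y x) \<and> (\<forall>x. \<not> E x x)"

definition graph_connected :: "'a set \<Rightarrow> ('a \<Rightarrow> 'a \<Rightarrow> bool) \<Rightarrow> bool" where
  "graph_connected V E \<longleftrightarrow> (\<forall>u\<in>V. \<forall>v\<in>V. E\<^sup>*\<^sup>* u v)"

definition nbhd :: "'a set \<Rightarrow> ('a \<Rightarrow> 'a \<Rightarrow> bool) \<Rightarrow> 'a \<Rightarrow> 'a set" where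
  "nbhd V E v = {u \<in> V. E v u}"

definition min_degree :: "'a set \<Rightarrow> ('a \<Rightarrow> 'a \<Rightarrow> bool) \<Rightarrow> nat" where
  "min_degree V E = Min ((\<lambda>v. card (nbhd V E v)) ` V)"

definition is_ISTDF :: "'a set \<Rightarrow> ('a \<Rightarrow> 'a \<Rightarrow> bool) \<Rightarrow> ('a \<Rightarrow> int) \<Rightarrow> bool" where
  "is_ISTDF V E f \<longleftrightarrow> (\<forall>v\<in>V. f v \<in> {-1, 1}) \<and> (\<forall>v\<in>V. sum f (nbhd V E v) \<le> 0)"

definition inv_signed_total_dom_number :: "'a set \<Rightarrow> ('a \<Rightarrow> 'a \<Rightarrow> bool) \<Rightarrow> int" where
  "inv_signed_total_dom_number V E = Max {sum f V | f. is_ISTDF V E f}"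

definition is_total_dom_set :: "'a set \<Rightarrow> ('a \<Rightarrow> 'a \<Rightarrow> bool) \<Rightarrow> 'a set \<Rightarrow> bool" where
  "is_total_dom_set V E D \<longleftrightarrow> D \<subseteq> V \<and> (\<forall>v\<in>V. \<exists>u\<in>D. E v u)"

definition total_dom_number :: "'a set \<Rightarrow> ('a \<Rightarrow> 'a \<Rightarrow> bool) \<Rightarrow> nat" where
  "total_dom_number V E = Min {card D | D. is_total_dom_set V E D}"

definition complete_adj :: "nat \<Rightarrow> nat \<Rightarrow> nat \<Rightarrow> bool" where
  "complete_adj n i j \<longleftrightarrow> i < n \<and> j < n \<and> i \<noteq> j"

definition cycle_adj :: "nat \<Rightarrow> nat \<Rightarrow> nat \<Rightarrow> bool" where
  "cycle_adj n i j \<longleftrightarrow> i < n \<and> j < n \<and> (j = (i + 1) mod n \<or> i = (j + 1) mod n)"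

end

theory Submission
  imports Defs
begin

text \<open>Let \<open>f\<close> be an ISTDF with negative set \<open>M\<close>. Since \<open>f(N(v)) \<le> 0\<close>, every vertex \<open>v\<close> has at
  least \<open>\<lceil>deg v / 2\<rceil> \<ge> k := \<lceil>\<delta>/2\<rceil>\<close> neighbours in \<open>M\<close>; hence deleting any \<open>k - 1\<close> vertices from \<open>M\<close>
  still leaves a total dominating set, so \<open>\<gamma>\<^sub>t \<le> |M| - k + 1\<close> and \<open>f(V) = n - 2|M| \<le> n - 2(\<gamma>\<^sub>t + k - 1)\<close>,
  which is the bound. For \<open>K\<^sub>n\<close> a negative set of size \<open>\<lfloor>n/2\<rfloor> + 1\<close>, and for \<open>C\<^sub>n\<close> a minimum total
  dominating set, is the negative set of an ISTDF attaining it.\<close>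

definition negative_vertices :: "'a set \<Rightarrow> ('a \<Rightarrow> int) \<Rightarrow> 'a set" where
  "negative_vertices V f = {v \<in> V. f v = -1}"

lemma sum_plus_minus_one:
  assumes "finite S" "\<forall>x\<in>S. f x \<in> {-1, 1::int}"
  shows "sum f S = int (card S) - 2 * int (card {x \<in> S. f x = -1})"
proof -
  have "sum f S = (\<Sum>x\<in>S. 1 - 2 * (if f x = -1 then 1 else 0))"
    by (rule sum.cong) (use assms in auto)
  also have "\<dots> = int (card S) - 2 * (\<Sum>x\<in>S. if f x = -1 then 1 else (0::int))"
    by (simp add: sum_subtractf sum_distrib_left)
  also have "(\<Sum>x\<in>S. if f x = -1 then 1 else (0::int)) = int (card {x \<in> S. f x = -1})"
    using assms(1) by (simp add: sum.If_cases Int_def conj_commute)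
  finally show ?thesis .
qed

lemma nbhd_subset: "nbhd V E v \<subseteq> V"
  by (auto simp: nbhd_def)

lemma finite_nbhd: "finite V \<Longrightarrow> finite (nbhd V E v)"
  using finite_subset[OF nbhd_subset] .

lemma sum_nbhd_plus_minus_one:
  assumes "finite V" "\<forall>v\<in>V. f v \<in> {-1, 1}"
  shows "sum f (nbhd V E v) =
    int (card (nbhd V E v)) - 2 * int (card (nbhd V E v \<inter> negative_vertices V f))"
proof -
  have "{x \<in> nbhd V E v. f x = -1} = nbhd V E v \<inter> negative_vertices V f"
    using nbhd_subset[of V E v] by (auto simp: negative_vertices_def)
  then show ?thesis
    using sum_plus_minus_one[OF finite_nbhd[OF assms(1)], of E v f] assms(2) nbhd_subset
    by (metis subsetD)
qed

lemma is_ISTDF_iff_card: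
  assumes "finite V"
  shows "is_ISTDF V E f \<longleftrightarrow> (\<forall>v\<in>V. f v \<in> {-1, 1}) \<and>
    (\<forall>v\<in>V. card (nbhd V E v) \<le> 2 * card (nbhd V E v \<inter> negative_vertices V f))"
proof -
  have "sum f (nbhd V E v) \<le> 0 \<longleftrightarrow>
      card (nbhd V E v) \<le> 2 * card (nbhd V E v \<inter> negative_vertices V f)"
    if "\<forall>v\<in>V. f v \<in> {-1, 1}" for v
    using sum_nbhd_plus_minus_one[OF assms that, of E v] by linarith
  then show ?thesis
    unfolding is_ISTDF_def by blast
qed

lemma ISTDF_weight:
  assumes "finite V" "is_ISTDF V E f"
  shows "sum f V = int (card V) - 2 * int (card (negative_vertices V f))"
  using sum_plus_minus_one[OF assms(1), of f] assms(2)
  by (simp add: is_ISTDF_def negative_vertices_def)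

lemma ISTDF_weights_finite_nonempty:
  assumes "finite V"
  shows "finite {sum f V | f. is_ISTDF V E f}" "{sum f V | f. is_ISTDF V E f} \<noteq> {}"
proof -
  have "card (negative_vertices V f) \<le> card V" for f
    using assms by (intro card_mono) (auto simp: negative_vertices_def)
  then have "{sum f V | f. is_ISTDF V E f} \<subseteq> {-int (card V)..int (card V)}"
    using ISTDF_weight[OF assms] by fastforce
  then show "finite {sum f V | f. is_ISTDF V E f}"
    using finite_subset by blast
  have "is_ISTDF V E (\<lambda>_. -1)"
    by (simp add: is_ISTDF_def)
  then show "{sum f V | f. is_ISTDF V E f} \<noteq> {}"
    by blast
qed

lemma inv_signed_total_dom_number_le:
  assumes "finite V" "\<And>f. is_ISTDF V E f \<Longrightarrow> sum f V \<le> B"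
  shows "inv_signed_total_dom_number V E \<le> B"
  unfolding inv_signed_total_dom_number_def
  using ISTDF_weights_finite_nonempty[OF assms(1), of E] assms(2)
  by (subst Max_le_iff) auto

lemma inv_signed_total_dom_number_ge:
  assumes "finite V" "is_ISTDF V E f"
  shows "sum f V \<le> inv_signed_total_dom_number V E"
  unfolding inv_signed_total_dom_number_def
  using ISTDF_weights_finite_nonempty[OF assms(1), of E] assms(2)
  by (intro Max_ge) auto

lemma inv_signed_total_dom_number_ge_card:
  assumes "finite V" "M \<subseteq> V"
    and half: "\<forall>v\<in>V. card (nbhd V E v) \<le> 2 * card (nbhd V E v \<inter> M)"
  shows "int (card V) - 2 * int (card M) \<le> inv_signed_total_dom_number V E"
proof -
  define f where "f v = (if v \<in> M then -1 else (1::int))" for v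
  have neg: "negative_vertices V f = M"
    using assms(2) by (auto simp: negative_vertices_def f_def)
  have "is_ISTDF V E f"
    unfolding is_ISTDF_iff_card[OF assms(1)] neg using half by (simp add: f_def)
  then show ?thesis
    using inv_signed_total_dom_number_ge[OF assms(1)] ISTDF_weight[OF assms(1)] neg by metis
qed

lemma total_dom_numbers_finite:
  assumes "finite V"
  shows "finite {card D | D. is_total_dom_set V E D}"
proof -
  have "{card D | D. is_total_dom_set V E D} \<subseteq> {..card V}"
    using assms by (auto simp: is_total_dom_set_def intro: card_mono)
  then show ?thesis
    using finite_subset by blast
qed

lemma total_dom_number_le:
  assumes "finite V" "is_total_dom_set V E D"
  shows "total_dom_number V E \<le> card D"
  unfolding total_dom_number_def using total_dom_numbers_finite[OF assms(1), of E] assms(2)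
  by (intro Min_le) auto

lemma total_dom_number_attained:
  assumes "finite V" "is_total_dom_set V E D"
  obtains D' where "is_total_dom_set V E D'" "card D' = total_dom_number V E"
proof -
  have "total_dom_number V E \<in> {card D | D. is_total_dom_set V E D}"
    unfolding total_dom_number_def using total_dom_numbers_finite[OF assms(1), of E] assms(2)
    by (intro Min_in) auto
  then show ?thesis
    using that by auto
qed

lemma is_total_dom_set_whole:
  assumes "\<forall>v\<in>V. nbhd V E v \<noteq> {}"
  shows "is_total_dom_set V E V"
  using assms by (auto simp: is_total_dom_set_def nbhd_def)

lemma total_dom_number_add_le_card:
  assumes "finite V" "V \<noteq> {}" "M \<subseteq> V" "1 \<le> k"
    and many: "\<forall>v\<in>V. k \<le> card (nbhd V E v \<inter> M)"
  shows "total_dom_number V E + k \<le> card M + 1"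
proof -
  have finM: "finite M"
    using assms(1,3) finite_subset by blast
  obtain v0 where "v0 \<in> V"
    using assms(2) by blast
  then have "k \<le> card M"
    using many card_mono[OF finM, of "nbhd V E v0 \<inter> M"] by force
  then obtain R where R: "R \<subseteq> M" "card R = k - 1"
    using obtain_subset_with_card_n[of "k - 1" M] by (metis diff_le_self le_trans)
  have finR: "finite R"
    using R(1) finM finite_subset by blast
  have "is_total_dom_set V E (M - R)"
    unfolding is_total_dom_set_def
  proof (intro conjI ballI)
    show "M - R \<subseteq> V"
      using assms(3) by blast
    fix v assume "v \<in> V"
    have "card (nbhd V E v \<inter> M) - card R \<le> card (nbhd V E v \<inter> M - R)"
      using diff_card_le_card_Diff[OF finR] .
    then have "nbhd V E v \<inter> M - R \<noteq> {}"
      using many \<open>v \<in> V\<close> R(2) assms(4) by force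
    then show "\<exists>u\<in>M - R. E v u"
      by (auto simp: nbhd_def)
  qed
  then have "total_dom_number V E \<le> card (M - R)"
    by (rule total_dom_number_le[OF assms(1)])
  also have "card (M - R) = card M - (k - 1)"
    using card_Diff_subset[OF finR R(1)] R(2) by simp
  finally show ?thesis
    using \<open>k \<le> card M\<close> by linarith
qed

lemma min_degree_le:
  assumes "finite V" "v \<in> V"
  shows "min_degree V E \<le> card (nbhd V E v)"
  unfolding min_degree_def using assms by (intro Min_le) auto

lemma min_degree_regular:
  assumes "finite V" "V \<noteq> {}" "\<forall>v\<in>V. card (nbhd V E v) = d"
  shows "min_degree V E = d"
  unfolding min_degree_def using assms by (intro Min_eqI) auto

lemma ceiling_half_nat: "\<lceil>real (d::nat) / 2\<rceil> = int ((d + 1) div 2)"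
proof (cases "even d")
  case False
  then obtain m where m: "d = 2 * m + 1"
    using oddE by blast
  then have "real d / 2 = real m + 1 / 2"
    by simp
  then show ?thesis
    using m by (simp add: ceiling_eq_iff)
qed auto

lemma bound_ceiling_eq:
  "\<lceil>(2 * real (g::nat) + real (d::nat) - 2) / 2\<rceil> = int g - 1 + int ((d + 1) div 2)"
proof -
  have "(2 * real g + real d - 2) / 2 = real d / 2 + real_of_int (int g - 1)"
    by simp
  then show ?thesis
    by (simp only: ceiling_add_of_int ceiling_half_nat)
qed

theorem inv_signed_total_dom_number_upper_bound:
  assumes fin: "finite V" and "V \<noteq> {}" and "1 \<le> min_degree V E"
  shows "inv_signed_total_dom_number V E
    \<le> int (card V) - 2 * \<lceil>(2 * real (total_dom_number V E) + real (min_degree V E) - 2) / 2\<rceil>"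
proof -
  define k where "k = (min_degree V E + 1) div 2"
  have "1 \<le> k"
    using assms(3) by (simp add: k_def)
  have "sum f V \<le> int (card V) - 2 * (int (total_dom_number V E) - 1 + int k)"
    if f: "is_ISTDF V E f" for f
  proof -
    let ?M = "negative_vertices V f"
    have "k \<le> card (nbhd V E v \<inter> ?M)" if "v \<in> V" for v
    proof -
      have "min_degree V E \<le> 2 * card (nbhd V E v \<inter> ?M)"
        using f that min_degree_le[OF fin that, of E] unfolding is_ISTDF_iff_card[OF fin]
        by (meson le_trans)
      then show ?thesis
        unfolding k_def by arith
    qed
    then have "total_dom_number V E + k \<le> card ?M + 1"
      using total_dom_number_add_le_card[OF fin \<open>V \<noteq> {}\<close> _ \<open>1 \<le> k\<close>]
      by (simp add: negative_vertices_def)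
    then have "int (total_dom_number V E) + int k \<le> int (card ?M) + 1"
      by linarith
    then show ?thesis
      using ISTDF_weight[OF fin f] by (simp add: algebra_simps)
  qed
  then show ?thesis
    unfolding bound_ceiling_eq k_def[symmetric] by (rule inv_signed_total_dom_number_le[OF fin])
qed

lemma complete_nbhd: "v < n \<Longrightarrow> nbhd {0..<n} (complete_adj n) v = {0..<n} - {v}"
  by (auto simp: nbhd_def complete_adj_def)

lemma complete_min_degree:
  assumes "2 \<le> n"
  shows "min_degree {0..<n} (complete_adj n) = n - 1"
  using assms by (intro min_degree_regular) (auto simp: complete_nbhd)

lemma complete_total_dom_number:
  assumes "2 \<le> n"
  shows "total_dom_number {0..<n} (complete_adj n) = 2"
proof -
  have "2 \<le> card D" if D: "is_total_dom_set {0..<n} (complete_adj n) D" for D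
  proof -
    obtain u where u: "u \<in> D" "complete_adj n 0 u"
      using D assms unfolding is_total_dom_set_def by force
    then obtain w where w: "w \<in> D" "complete_adj n u w"
      using D unfolding is_total_dom_set_def complete_adj_def by force
    have "card {u, w} \<le> card D"
      using u w D finite_subset by (intro card_mono) (auto simp: is_total_dom_set_def)
    with w show ?thesis
      by (simp add: complete_adj_def)
  qed
  moreover have "is_total_dom_set {0..<n} (complete_adj n) {0, 1}"
    using assms by (auto simp: is_total_dom_set_def complete_adj_def)
  ultimately show ?thesis
    unfolding total_dom_number_def using total_dom_numbers_finite[of "{0..<n}"]
    by (intro Min_eqI) force+
qed

lemma complete_inv_signed_total_dom_number_ge:
  assumes "2 \<le> n"
  shows "int n - 2 * int (n div 2 + 1) \<le> inv_signed_total_dom_number {0..<n} (complete_adj n)"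
proof -
  let ?M = "{0..<n div 2 + 1}"
  have "card (nbhd {0..<n} (complete_adj n) v) \<le> 2 * card (nbhd {0..<n} (complete_adj n) v \<inter> ?M)"
    if "v < n" for v
  proof -
    have "n div 2 \<le> card (?M - {v})"
      using diff_card_le_card_Diff[of "{v}" ?M] by simp
    moreover have "({0..<n} - {v}) \<inter> ?M = ?M - {v}"
      using assms by auto
    ultimately show ?thesis
      using that by (simp add: complete_nbhd)
  qed
  then show ?thesis
    using inv_signed_total_dom_number_ge_card[of "{0..<n}" ?M] assms by simp
qed

lemma cycle_nbhd:
  assumes "i < n"
  shows "nbhd {0..<n} (cycle_adj n) i = {(i + 1) mod n, (i + n - 1) mod n}"
proof -
  have "i = (j + 1) mod n \<longleftrightarrow> j = (i + n - 1) mod n" if "j < n" for j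
    using assms that by (cases "j = n - 1"; cases "i = 0") (auto simp: mod_if)
  then show ?thesis
    using assms by (auto simp: nbhd_def cycle_adj_def)
qed

lemma card_cycle_nbhd:
  assumes "3 \<le> n" "i < n"
  shows "card (nbhd {0..<n} (cycle_adj n) i) = 2"
  using assms by (auto simp: cycle_nbhd mod_if)

lemma cycle_min_degree:
  assumes "3 \<le> n"
  shows "min_degree {0..<n} (cycle_adj n) = 2"
  using assms by (intro min_degree_regular) (auto simp: card_cycle_nbhd)

lemma cycle_inv_signed_total_dom_number_ge:
  assumes "3 \<le> n"
  shows "int n - 2 * int (total_dom_number {0..<n} (cycle_adj n))
    \<le> inv_signed_total_dom_number {0..<n} (cycle_adj n)"
proof -
  have "nbhd {0..<n} (cycle_adj n) v \<noteq> {}" if "v < n" for v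
    using card_cycle_nbhd[OF assms that] by (metis card.empty zero_neq_numeral)
  then have "is_total_dom_set {0..<n} (cycle_adj n) {0..<n}"
    by (intro is_total_dom_set_whole) simp
  then obtain D where D: "is_total_dom_set {0..<n} (cycle_adj n) D"
      "card D = total_dom_number {0..<n} (cycle_adj n)"
    by (rule total_dom_number_attained[OF finite_atLeastLessThan])
  have "card (nbhd {0..<n} (cycle_adj n) v) \<le> 2 * card (nbhd {0..<n} (cycle_adj n) v \<inter> D)"
    if v: "v < n" for v
  proof -
    have "v \<in> {0..<n}"
      using v by simp
    then obtain u where "u \<in> D" "cycle_adj n v u"
      using D(1) unfolding is_total_dom_set_def by blast
    then have "u \<in> nbhd {0..<n} (cycle_adj n) v \<inter> D"
      by (simp add: nbhd_def cycle_adj_def)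
    moreover have "finite (nbhd {0..<n} (cycle_adj n) v \<inter> D)"
      using finite_nbhd[of "{0..<n}"] by simp
    ultimately have "0 < card (nbhd {0..<n} (cycle_adj n) v \<inter> D)"
      using card_gt_0_iff by blast
    then show ?thesis
      using card_cycle_nbhd[OF assms v] by simp
  qed
  then show ?thesis
    using inv_signed_total_dom_number_ge_card[of "{0..<n}" D] D by (simp add: is_total_dom_set_def)
qed

theorem mainTheorem2:
  shows "(\<forall>(V :: 'a set) E. simple_graph V E \<and> graph_connected V E \<and> V \<noteq> {} \<and> min_degree V E \<ge> 1 \<longrightarrow>
            inv_signed_total_dom_number V E
              \<le> int (card V) - 2 * \<lceil>(2 * real (total_dom_number V E) + real (min_degree V E) - 2) / 2\<rceil>)
    \<and> (\<forall>n::nat. n \<ge> 2 \<longrightarrow>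
            inv_signed_total_dom_number {0..<n} (complete_adj n)
              = int n - 2 * \<lceil>(2 * real (total_dom_number {0..<n} (complete_adj n))
                                + real (min_degree {0..<n} (complete_adj n)) - 2) / 2\<rceil>)
    \<and> (\<forall>n::nat. n \<ge> 3 \<longrightarrow>
            inv_signed_total_dom_number {0..<n} (cycle_adj n)
              = int n - 2 * \<lceil>(2 * real (total_dom_number {0..<n} (cycle_adj n))
                                + real (min_degree {0..<n} (cycle_adj n)) - 2) / 2\<rceil>)"
proof (intro conjI allI impI)
  fix V :: "'a set" and E
  assume "simple_graph V E \<and> graph_connected V E \<and> V \<noteq> {} \<and> 1 \<le> min_degree V E"
  then show "inv_signed_total_dom_number V E
    \<le> int (card V) - 2 * \<lceil>(2 * real (total_dom_number V E) + real (min_degree V E) - 2) / 2\<rceil>"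
    by (intro inv_signed_total_dom_number_upper_bound) (auto simp: simple_graph_def)
next
  fix n :: nat
  assume n: "2 \<le> n"
  show "inv_signed_total_dom_number {0..<n} (complete_adj n)
    = int n - 2 * \<lceil>(2 * real (total_dom_number {0..<n} (complete_adj n))
                      + real (min_degree {0..<n} (complete_adj n)) - 2) / 2\<rceil>"
    unfolding complete_min_degree[OF n] complete_total_dom_number[OF n] bound_ceiling_eq
    using inv_signed_total_dom_number_upper_bound[of "{0..<n}" "complete_adj n",
        unfolded complete_min_degree[OF n] complete_total_dom_number[OF n] bound_ceiling_eq]
      complete_inv_signed_total_dom_number_ge[OF n] n
    by simp
next
  fix n :: nat
  assume n: "3 \<le> n"
  show "inv_signed_total_dom_number {0..<n} (cycle_adj n)
    = int n - 2 * \<lceil>(2 * real (total_dom_number {0..<n} (cycle_adj n))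
                      + real (min_degree {0..<n} (cycle_adj n)) - 2) / 2\<rceil>"
    unfolding cycle_min_degree[OF n] bound_ceiling_eq
    using inv_signed_total_dom_number_upper_bound[of "{0..<n}" "cycle_adj n",
        unfolded cycle_min_degree[OF n] bound_ceiling_eq]
      cycle_inv_signed_total_dom_number_ge[OF n] n
    by simp
qed

end
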